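(* Let $c\ge2$, let $\Gamma$ be a $c$-uniform unoriented hypergraph with $E\neq\varnothing$ and no isolated vertices, with smallest normalized Laplacian eigenvalue $\lambda_1$, and let $q\in[0,c-1]$ be real. Then \[ \chi^{q\text{-t}}(\Gamma)\;\ge\;\frac{c-\lambda_1}{q+1-\lambda_1}. \] Moreover, the bound is sharp: whenever $q$ is an integer with $(q+1)\mid c$, there exists a $c$-uniform unoriented hypergraph attaining equality.
   Context: A hypergraph has finite vertex set $V$ and edge set $E\subseteq\mathcal P(V)$; it is $c$-uniform if $|e|=c$ for all $e$, and unoriented means all incidences have orientation $+1$. $\deg v=|\{e\in E: v\in e\}|\ge1$, $D=\mathrm{diag}(\deg v)$, adjacency $A_{v,v}=0$ and $A_{v,w}=-|\{e\in E: v,w\in e\}|$ for $v\ne w$, normalized Laplacian $L=\mathrm{Id}-D^{-1}A$ with eigenvalues $\lambda_1\le\dots\le\lambda_N$. For $q\in[0,c-1]$, a $k$-coloring $V\to\{1,\dots,k\}$ with color classes $V_1,\dots,V_k$ is $q$-tailored if for all $i$ and all $v\in V_i$, $\sum_{w\in V_i}|A_{v,w}|\le q\deg v$; $\chi^{q\text{-t}}(\Gamma)$ is the least $k$ admitting a $q$-tailored $k$-coloring. *)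

theory Defs
  imports Main Complex_Main
begin

definition hdeg :: "'a set set \<Rightarrow> 'a \<Rightarrow> nat" where
  "hdeg E v = card {e \<in> E. v \<in> e}"

definition hadj :: "'a set set \<Rightarrow> 'a \<Rightarrow> 'a \<Rightarrow> real" where
  "hadj E v w = (if v = w then 0 else - real (card {e \<in> E. v \<in> e \<and> w \<in> e}))"

definition hlap :: "'a set set \<Rightarrow> 'a \<Rightarrow> 'a \<Rightarrow> real" where
  "hlap E v w = (if v = w then 1 else 0) - hadj E v w / real (hdeg E v)"

definition is_lap_eigenvalue :: "'a set \<Rightarrow> 'a set set \<Rightarrow> real \<Rightarrow> bool" where
  "is_lap_eigenvalue V E \<mu> \<longleftrightarrow>
     (\<exists>x :: 'a \<Rightarrow> real. (\<exists>v\<in>V. x v \<noteq> 0) \<and>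
        (\<forall>v\<in>V. (\<Sum>w\<in>V. hlap E v w * x w) = \<mu> * x v))"

text \<open>Smallest eigenvalue lambda_1 of the normalized Laplacian (all eigenvalues are real).\<close>
definition lambda1 :: "'a set \<Rightarrow> 'a set set \<Rightarrow> real" where
  "lambda1 V E = Min {\<mu>. is_lap_eigenvalue V E \<mu>}"

definition uniform_hypergraph :: "'a set \<Rightarrow> 'a set set \<Rightarrow> nat \<Rightarrow> bool" where
  "uniform_hypergraph V E c \<longleftrightarrow> finite V \<and> E \<noteq> {} \<and>
     (\<forall>e\<in>E. e \<subseteq> V \<and> card e = c) \<and> (\<forall>v\<in>V. hdeg E v \<ge> 1)"

definition q_tailored :: "'a set \<Rightarrow> 'a set set \<Rightarrow> real \<Rightarrow> nat \<Rightarrow> ('a \<Rightarrow> nat) \<Rightarrow> bool" where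
  "q_tailored V E q k f \<longleftrightarrow> (\<forall>v\<in>V. f v \<in> {1..k}) \<and>
     (\<forall>v\<in>V. (\<Sum>w\<in>{w\<in>V. f w = f v}. \<bar>hadj E v w\<bar>) \<le> q * real (hdeg E v))"

definition chi_qt :: "'a set \<Rightarrow> 'a set set \<Rightarrow> real \<Rightarrow> nat" where
  "chi_qt V E q = (LEAST k. \<exists>f. q_tailored V E q k f)"

end

theory Submission
  imports Defs "HOL-Analysis.Analysis" "HOL-Library.Function_Algebras"
begin

(* Let N v w be the number of edges containing both v and w, so that N v v = deg v and D L = N.
   Then lambda_1 is the minimum of the Rayleigh quotient x^T N x / x^T D x, attained on a compact
   sphere. Given a q-tailored k-colouring with classes V_j, test it on x_j = 1_{V_j} - 1/k: in the
   sum of the numerators, row v of N contributes at most (q + 1) deg v through its own colour class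
   and exactly c deg v / k through the constant part, while the denominators add up to
   (1 - 1/k) vol V. Hence lambda_1 (k - 1) <= k (q + 1) - c, which rearranges to the bound because
   lambda_1 <= c (constant vectors have eigenvalue c). A single edge on c vertices has lambda_1 = 0
   and needs exactly c / (q + 1) colours. *)

section \<open>The codegree form\<close>

definition hcodeg :: "'a set set \<Rightarrow> 'a \<Rightarrow> 'a \<Rightarrow> real" where
  "hcodeg E v w = real (card {e\<in>E. v \<in> e \<and> w \<in> e})"

definition codeg_form :: "'a set \<Rightarrow> 'a set set \<Rightarrow> ('a \<Rightarrow> real) \<Rightarrow> ('a \<Rightarrow> real) \<Rightarrow> real" where
  "codeg_form V E x y = (\<Sum>v\<in>V. \<Sum>w\<in>V. hcodeg E v w * x v * y w)"

definition deg_inner :: "'a set \<Rightarrow> 'a set set \<Rightarrow> ('a \<Rightarrow> real) \<Rightarrow> ('a \<Rightarrow> real) \<Rightarrow> real" where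
  "deg_inner V E x y = (\<Sum>v\<in>V. real (hdeg E v) * x v * y v)"

definition codeg_eigenvector :: "'a set \<Rightarrow> 'a set set \<Rightarrow> real \<Rightarrow> ('a \<Rightarrow> real) \<Rightarrow> bool" where
  "codeg_eigenvector V E \<mu> x \<longleftrightarrow> (\<exists>v\<in>V. x v \<noteq> 0) \<and>
     (\<forall>v\<in>V. (\<Sum>w\<in>V. hcodeg E v w * x w) = \<mu> * real (hdeg E v) * x v)"

lemma uniform_hypergraphD:
  assumes "uniform_hypergraph V E c"
  shows "finite V" "finite E" "\<And>e. e \<in> E \<Longrightarrow> e \<subseteq> V" "\<And>e. e \<in> E \<Longrightarrow> card e = c"
    "\<And>v. v \<in> V \<Longrightarrow> hdeg E v > 0"
proof -
  show "finite V" using assms by (simp add: uniform_hypergraph_def)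
  moreover have "E \<subseteq> Pow V" using assms by (auto simp: uniform_hypergraph_def)
  ultimately show "finite E" by (meson finite_Pow_iff finite_subset)
qed (use assms in \<open>auto simp: uniform_hypergraph_def\<close>)

lemma uniform_hypergraph_vertices_nonempty:
  assumes "uniform_hypergraph V E c" "c > 0"
  shows "V \<noteq> {}"
proof -
  obtain e where "e \<in> E" using assms(1) by (auto simp: uniform_hypergraph_def)
  with assms uniform_hypergraphD(3,4)[OF assms(1)] show ?thesis by fastforce
qed

lemma hcodeg_diag [simp]: "hcodeg E v v = real (hdeg E v)"
  by (simp add: hcodeg_def hdeg_def)

lemma hcodeg_commute: "hcodeg E v w = hcodeg E w v"
  by (simp add: hcodeg_def conj_commute)

lemma hcodeg_eq_abs_hadj: "hcodeg E v w = \<bar>hadj E v w\<bar> + of_bool (w = v) * real (hdeg E v)"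
  by (auto simp: hcodeg_def hadj_def hdeg_def)

lemma hcodeg_eq_sum_edges:
  "finite E \<Longrightarrow> hcodeg E v w = (\<Sum>e\<in>E. of_bool (v \<in> e) * of_bool (w \<in> e))"
  by (auto simp: hcodeg_def Int_def intro!: arg_cong[where f = card])

lemma hdeg_mult_hlap: "hdeg E v > 0 \<Longrightarrow> real (hdeg E v) * hlap E v w = hcodeg E v w"
  by (cases "v = w") (auto simp: hlap_def hadj_def hcodeg_def hdeg_def)

lemma sum_hcodeg_row:
  assumes "uniform_hypergraph V E c" "v \<in> V"
  shows "(\<Sum>w\<in>V. hcodeg E v w) = real c * real (hdeg E v)"
proof -
  note uh = uniform_hypergraphD[OF assms(1)]
  have "(\<Sum>w\<in>V. hcodeg E v w) = (\<Sum>w\<in>V. \<Sum>e\<in>E. of_bool (v \<in> e) * of_bool (w \<in> e))"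
    using uh(2) by (simp add: hcodeg_eq_sum_edges)
  also have "\<dots> = (\<Sum>e\<in>E. of_bool (v \<in> e) * (\<Sum>w\<in>V. of_bool (w \<in> e)))"
    by (subst sum.swap) (simp add: sum_distrib_left)
  also have "\<dots> = (\<Sum>e\<in>E. of_bool (v \<in> e) * real c)"
    using uh(1,3,4) by (intro sum.cong refl) (simp add: Int_absorb1 Int_def[symmetric])
  also have "\<dots> = real c * real (hdeg E v)"
    using uh(2) by (simp add: hdeg_def sum_distrib_right[symmetric] Int_def mult.commute)
  finally show ?thesis .
qed

lemma is_lap_eigenvalue_iff_codeg_eigenvector:
  assumes "\<And>v. v \<in> V \<Longrightarrow> hdeg E v > 0"
  shows "is_lap_eigenvalue V E \<mu> \<longleftrightarrow> (\<exists>x. codeg_eigenvector V E \<mu> x)"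
proof -
  have "(\<Sum>w\<in>V. hlap E v w * x w) = \<mu> * x v \<longleftrightarrow>
        (\<Sum>w\<in>V. hcodeg E v w * x w) = \<mu> * real (hdeg E v) * x v" if "v \<in> V" for v x
  proof -
    have "(\<Sum>w\<in>V. hcodeg E v w * x w) = real (hdeg E v) * (\<Sum>w\<in>V. hlap E v w * x w)"
      using assms[OF that] by (simp add: sum_distrib_left hdeg_mult_hlap mult.assoc[symmetric])
    then show ?thesis using assms[OF that] by auto
  qed
  then show ?thesis unfolding is_lap_eigenvalue_def codeg_eigenvector_def by auto
qed

lemma codeg_form_commute: "finite V \<Longrightarrow> codeg_form V E x y = codeg_form V E y x"
  unfolding codeg_form_def by (subst sum.swap) (simp add: hcodeg_commute mult_ac)

lemma deg_inner_commute: "deg_inner V E x y = deg_inner V E y x"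
  unfolding deg_inner_def by (simp add: mult_ac)

lemma codeg_form_add_scaled:
  "codeg_form V E (\<lambda>v. x v + t * y v) (\<lambda>v. x v + t * y v) =
     codeg_form V E x x + t * codeg_form V E x y + t * codeg_form V E y x + t\<^sup>2 * codeg_form V E y y"
  unfolding codeg_form_def
  by (simp add: sum.distrib[symmetric] sum_distrib_left algebra_simps power2_eq_square)

lemma deg_inner_add_scaled:
  "deg_inner V E (\<lambda>v. x v + t * y v) (\<lambda>v. x v + t * y v) =
     deg_inner V E x x + 2 * t * deg_inner V E x y + t\<^sup>2 * deg_inner V E y y"
  unfolding deg_inner_def
  by (simp add: sum.distrib[symmetric] sum_distrib_left algebra_simps power2_eq_square)

lemma codeg_form_scaled: "codeg_form V E (\<lambda>v. s * x v) (\<lambda>v. s * x v) = s\<^sup>2 * codeg_form V E x x"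
  unfolding codeg_form_def by (simp add: sum_distrib_left power2_eq_square algebra_simps)

lemma deg_inner_scaled: "deg_inner V E (\<lambda>v. s * x v) (\<lambda>v. s * x v) = s\<^sup>2 * deg_inner V E x x"
  unfolding deg_inner_def by (simp add: sum_distrib_left power2_eq_square algebra_simps)

lemma codeg_form_cong:
  "(\<And>v. v \<in> V \<Longrightarrow> x v = x' v) \<Longrightarrow> (\<And>v. v \<in> V \<Longrightarrow> y v = y' v) \<Longrightarrow>
     codeg_form V E x y = codeg_form V E x' y'"
  unfolding codeg_form_def by (auto intro!: sum.cong)

lemma deg_inner_cong:
  "(\<And>v. v \<in> V \<Longrightarrow> x v = x' v) \<Longrightarrow> (\<And>v. v \<in> V \<Longrightarrow> y v = y' v) \<Longrightarrow>
     deg_inner V E x y = deg_inner V E x' y'"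
  unfolding deg_inner_def by (auto intro!: sum.cong)

lemma codeg_form_delta_left:
  assumes "finite V" "u \<in> V"
  shows "codeg_form V E (\<lambda>v. of_bool (v = u)) x = (\<Sum>w\<in>V. hcodeg E u w * x w)"
proof -
  have "codeg_form V E (\<lambda>v. of_bool (v = u)) x = (\<Sum>v\<in>V. of_bool (v = u) * (\<Sum>w\<in>V. hcodeg E v w * x w))"
    unfolding codeg_form_def by (simp add: sum_distrib_left mult_ac)
  moreover have "V \<inter> {v. v = u} = {u}" using assms(2) by auto
  ultimately show ?thesis using assms(1) by simp
qed

lemma codeg_form_delta:
  assumes "finite V" "u \<in> V"
  shows "codeg_form V E (\<lambda>v. of_bool (v = u)) (\<lambda>v. of_bool (v = u)) = real (hdeg E u)"
proof -
  have "V \<inter> {v. v = u} = {u}" using assms(2) by auto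
  then show ?thesis using assms by (simp add: codeg_form_delta_left)
qed

lemma deg_inner_delta_right:
  assumes "finite V" "u \<in> V"
  shows "deg_inner V E x (\<lambda>v. of_bool (v = u)) = real (hdeg E u) * x u"
proof -
  have "V \<inter> {v. v = u} = {u}" using assms(2) by auto
  then show ?thesis unfolding deg_inner_def using assms(1) by simp
qed

lemma deg_inner_self_nonneg: "0 \<le> deg_inner V E x x"
  unfolding deg_inner_def by (intro sum_nonneg) (simp add: mult.assoc)

lemma deg_inner_self_pos:
  assumes "finite V" "\<And>v. v \<in> V \<Longrightarrow> hdeg E v > 0" "v \<in> V" "x v \<noteq> 0"
  shows "deg_inner V E x x > 0"
proof -
  have "0 < x v * x v" using assms(4) by (metis not_real_square_gt_zero)
  then have "0 < real (hdeg E v) * (x v * x v)" using assms(2,3) by simp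
  then have "0 < real (hdeg E v) * x v * x v" by (simp add: mult.assoc)
  also have "\<dots> \<le> deg_inner V E x x"
    unfolding deg_inner_def using assms(1,3) by (intro member_le_sum) (auto simp: mult.assoc)
  finally show ?thesis .
qed

section \<open>The Rayleigh quotient\<close>

lemma linear_coeff_zero_if_quadratic_nonneg:
  fixes a b :: real
  assumes "\<And>t. 0 \<le> 2 * t * a + t\<^sup>2 * b"
  shows "a = 0"
proof (rule ccontr)
  assume "a \<noteq> 0"
  define s where "s = \<bar>b\<bar> + 1"
  have "s > 0" "b - 2 * s < 0" unfolding s_def by auto
  have "2 * (- a / s) * a + (- a / s)\<^sup>2 * b = a\<^sup>2 / s\<^sup>2 * (b - 2 * s)"
    using \<open>s > 0\<close> by (simp add: field_simps power2_eq_square)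
  also have "\<dots> < 0"
    using \<open>a \<noteq> 0\<close> \<open>s > 0\<close> \<open>b - 2 * s < 0\<close> by (intro mult_pos_neg) auto
  finally show False using assms[of "- a / s"] by simp
qed

lemma rayleigh_minimizer_eigen_equation:
  assumes "finite V" "u \<in> V"
    and bound: "\<And>z. \<mu> * deg_inner V E z z \<le> codeg_form V E z z"
    and attained: "codeg_form V E x x = \<mu> * deg_inner V E x x"
  shows "(\<Sum>w\<in>V. hcodeg E u w * x w) = \<mu> * real (hdeg E u) * x u"
proof -
  define \<delta> :: "'a \<Rightarrow> real" where "\<delta> = (\<lambda>v. of_bool (v = u))"
  define a where "a = (\<Sum>w\<in>V. hcodeg E u w * x w) - \<mu> * real (hdeg E u) * x u"
  have "codeg_form V E x \<delta> = (\<Sum>w\<in>V. hcodeg E u w * x w)"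
    unfolding codeg_form_commute[OF assms(1), of E x] \<delta>_def
    by (rule codeg_form_delta_left[OF assms(1,2)])
  moreover have "codeg_form V E \<delta> x = (\<Sum>w\<in>V. hcodeg E u w * x w)"
    unfolding \<delta>_def by (rule codeg_form_delta_left[OF assms(1,2)])
  moreover have "codeg_form V E \<delta> \<delta> = real (hdeg E u)"
    unfolding \<delta>_def by (rule codeg_form_delta[OF assms(1,2)])
  ultimately have F: "codeg_form V E (\<lambda>v. x v + t * \<delta> v) (\<lambda>v. x v + t * \<delta> v) =
      codeg_form V E x x + 2 * t * (\<Sum>w\<in>V. hcodeg E u w * x w) + t\<^sup>2 * real (hdeg E u)" for t
    by (simp add: codeg_form_add_scaled)
  have "deg_inner V E x \<delta> = real (hdeg E u) * x u"
    unfolding \<delta>_def by (rule deg_inner_delta_right[OF assms(1,2)])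
  moreover have "deg_inner V E \<delta> \<delta> = real (hdeg E u)"
    unfolding \<delta>_def using deg_inner_delta_right[OF assms(1,2)] by simp
  ultimately have G: "deg_inner V E (\<lambda>v. x v + t * \<delta> v) (\<lambda>v. x v + t * \<delta> v) =
      deg_inner V E x x + 2 * t * (real (hdeg E u) * x u) + t\<^sup>2 * real (hdeg E u)" for t
    by (simp add: deg_inner_add_scaled)
  have "0 \<le> 2 * t * a + t\<^sup>2 * ((1 - \<mu>) * real (hdeg E u))" for t
    using bound[of "\<lambda>v. x v + t * \<delta> v"] unfolding F G attained a_def
    by (simp add: algebra_simps)
  then have "a = 0" by (rule linear_coeff_zero_if_quadratic_nonneg)
  then show ?thesis unfolding a_def by simp
qed

lemma compact_box: "compact (PiE UNIV (\<lambda>v. if v \<in> V then {-1..1::real} else {0}))"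
proof -
  have "compactin (product_topology (\<lambda>_. euclidean) UNIV)
          (PiE UNIV (\<lambda>v. if v \<in> V then {-1..1::real} else {0}))"
    by (subst compactin_PiE) auto
  then show ?thesis by (simp add: euclidean_product_topology)
qed

lemma continuous_on_codeg_form: "continuous_on S (\<lambda>x. codeg_form V E x x)"
  unfolding codeg_form_def
  by (intro continuous_intros; rule continuous_on_subset[OF continuous_on_product_coordinates])
    simp_all

lemma continuous_on_deg_inner: "continuous_on S (\<lambda>x. deg_inner V E x x)"
  unfolding deg_inner_def
  by (intro continuous_intros; rule continuous_on_subset[OF continuous_on_product_coordinates])
    simp_all

lemma deg_sphere_minimizer_exists:
  assumes fin: "finite V" and ne: "V \<noteq> {}" and deg: "\<And>v. v \<in> V \<Longrightarrow> hdeg E v > 0"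
  obtains x0 where "deg_inner V E x0 x0 = 1"
    "\<And>z. deg_inner V E z z = 1 \<Longrightarrow> codeg_form V E x0 x0 \<le> codeg_form V E z z"
proof -
  define K where "K = PiE UNIV (\<lambda>v. if v \<in> V then {-1..1::real} else {0})"
  define S where "S = K \<inter> {x. deg_inner V E x x = 1}"
  define restrict where "restrict z v = (if v \<in> V then z v else 0)" for z :: "'a \<Rightarrow> real" and v
  (* As deg v \<ge> 1, the D-unit sphere restricted to V lies in the compact box K. *)
  have restrict_in_S: "restrict z \<in> S" if z: "deg_inner V E z z = 1" for z
  proof -
    have "\<bar>z v\<bar> \<le> 1" if v: "v \<in> V" for v
    proof -
      have "(z v)\<^sup>2 \<le> real (hdeg E v) * z v * z v"
        using deg[OF v] by (simp add: power2_eq_square mult.assoc mult_le_cancel_right1)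
      also have "\<dots> \<le> deg_inner V E z z"
        unfolding deg_inner_def using fin v
        by (intro member_le_sum) (auto simp: mult.assoc)
      finally show ?thesis using z by (simp add: abs_square_le_1)
    qed
    moreover have "deg_inner V E (restrict z) (restrict z) = 1"
      using z by (simp add: restrict_def cong: deg_inner_cong)
    ultimately show ?thesis by (force simp: S_def K_def PiE_iff restrict_def abs_le_iff)
  qed
  have restrict_codeg_form: "codeg_form V E (restrict z) (restrict z) = codeg_form V E z z" for z
    by (rule codeg_form_cong) (simp_all add: restrict_def)
  obtain v0 where v0: "v0 \<in> V" using ne by auto
  let ?x1 = "\<lambda>v. 1 / sqrt (hdeg E v0) * of_bool (v = v0)"
  have "deg_inner V E ?x1 ?x1 = 1"
    unfolding deg_inner_scaled deg_inner_delta_right[OF fin v0] using deg[OF v0]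
    by (simp add: power_divide)
  then have "S \<noteq> {}" using restrict_in_S by blast
  moreover have "compact S"
    unfolding S_def K_def
    by (intro compact_Int_closed compact_box closed_Collect_eq continuous_on_deg_inner
        continuous_on_const)
  ultimately obtain x0 where x0: "x0 \<in> S" "\<And>y. y \<in> S \<Longrightarrow> codeg_form V E x0 x0 \<le> codeg_form V E y y"
    using continuous_attains_inf[OF \<open>compact S\<close> \<open>S \<noteq> {}\<close> continuous_on_codeg_form] by blast
  show thesis
  proof
    show "deg_inner V E x0 x0 = 1" using x0(1) by (simp add: S_def)
    show "codeg_form V E x0 x0 \<le> codeg_form V E z z" if "deg_inner V E z z = 1" for z
      using x0(2)[OF restrict_in_S[OF that]] by (simp add: restrict_codeg_form)
  qed
qed

lemma exists_lap_eigenvalue_below_rayleigh: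
  assumes fin: "finite V" and ne: "V \<noteq> {}" and deg: "\<And>v. v \<in> V \<Longrightarrow> hdeg E v > 0"
  obtains \<mu> where "is_lap_eigenvalue V E \<mu>" "\<And>z. \<mu> * deg_inner V E z z \<le> codeg_form V E z z"
proof -
  obtain x0 where x0: "deg_inner V E x0 x0 = 1"
    and min: "\<And>z. deg_inner V E z z = 1 \<Longrightarrow> codeg_form V E x0 x0 \<le> codeg_form V E z z"
    using deg_sphere_minimizer_exists[OF fin ne deg] by blast
  define \<mu> where "\<mu> = codeg_form V E x0 x0"
  have bound: "\<mu> * deg_inner V E z z \<le> codeg_form V E z z" for z
  proof (cases "deg_inner V E z z = 0")
    case True
    then have "\<forall>v\<in>V. z v = 0" using deg_inner_self_pos[OF fin deg] by fastforce
    then have "codeg_form V E z z = codeg_form V E (\<lambda>_. 0) (\<lambda>_. 0)" by (intro codeg_form_cong) auto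
    then show ?thesis using True by (simp add: codeg_form_def)
  next
    case False
    then have pos: "deg_inner V E z z > 0" using deg_inner_self_nonneg[of V E z] by simp
    define s where "s = 1 / sqrt (deg_inner V E z z)"
    have s2: "s\<^sup>2 = 1 / deg_inner V E z z" using pos by (simp add: s_def power_divide)
    have "deg_inner V E (\<lambda>v. s * z v) (\<lambda>v. s * z v) = 1"
      unfolding deg_inner_scaled s2 using pos by simp
    then have "\<mu> \<le> s\<^sup>2 * codeg_form V E z z"
      unfolding \<mu>_def codeg_form_scaled[symmetric] by (rule min)
    then show ?thesis using pos by (simp add: s2 le_divide_eq mult.commute)
  qed
  have "codeg_eigenvector V E \<mu> x0"
    unfolding codeg_eigenvector_def
  proof
    show "\<exists>v\<in>V. x0 v \<noteq> 0"
    proof (rule ccontr)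
      assume "\<not> (\<exists>v\<in>V. x0 v \<noteq> 0)"
      then show False using x0 by (simp add: deg_inner_def)
    qed
    show "\<forall>u\<in>V. (\<Sum>w\<in>V. hcodeg E u w * x0 w) = \<mu> * real (hdeg E u) * x0 u"
      using rayleigh_minimizer_eigen_equation[OF fin _ bound] x0 by (simp add: \<mu>_def)
  qed
  then show thesis
    using that bound is_lap_eigenvalue_iff_codeg_eigenvector[OF deg] by blast
qed

section \<open>The spectrum of the normalized Laplacian\<close>

interpretation real_fun: vector_space "\<lambda>(r::real) (f::'a \<Rightarrow> real) x. r * f x"
  by unfold_locales (auto simp: fun_eq_iff algebra_simps)

lemma sum_fun_apply: "(\<Sum>y\<in>T. g y) x = (\<Sum>y\<in>T. g y x)"
  by (induct T rule: infinite_finite_induct) auto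

lemma real_fun_in_span_deltas:
  assumes "finite V" "\<And>v. v \<notin> V \<Longrightarrow> x v = 0"
  shows "x \<in> real_fun.span ((\<lambda>u v. of_bool (v = u)) ` V)"
proof -
  have "x = (\<Sum>u\<in>V. (\<lambda>v. x u * of_bool (v = u)))"
  proof
    fix v
    have "V \<inter> {u. v = u} = (if v \<in> V then {v} else {})" by auto
    then show "x v = (\<Sum>u\<in>V. (\<lambda>v. x u * of_bool (v = u))) v"
      using assms by (auto simp: sum_fun_apply)
  qed
  also have "\<dots> \<in> real_fun.span ((\<lambda>u v. of_bool (v = u)) ` V)"
    by (intro real_fun.span_sum real_fun.span_scale real_fun.span_base) auto
  finally show ?thesis .
qed

lemma deg_orthogonal_independent:
  assumes nonzero: "\<And>x. x \<in> X \<Longrightarrow> deg_inner V E x x \<noteq> 0"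
    and orth: "\<And>x y. x \<in> X \<Longrightarrow> y \<in> X \<Longrightarrow> x \<noteq> y \<Longrightarrow> deg_inner V E x y = 0"
  shows "real_fun.independent X"
proof
  assume "real_fun.dependent X"
  then obtain T u y0 where T: "finite T" "T \<subseteq> X" and comb: "(\<Sum>y\<in>T. (\<lambda>v. u y * y v)) = 0"
    and y0: "y0 \<in> T" "u y0 \<noteq> 0"
    unfolding real_fun.dependent_explicit by blast
  have "0 = deg_inner V E (\<Sum>y\<in>T. (\<lambda>v. u y * y v)) y0"
    unfolding comb by (simp add: deg_inner_def)
  also have "\<dots> = (\<Sum>y\<in>T. u y * deg_inner V E y y0)"
    unfolding deg_inner_def sum_fun_apply sum_distrib_left sum_distrib_right
    by (subst sum.swap) (simp add: mult_ac)
  also have "\<dots> = u y0 * deg_inner V E y0 y0"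
  proof -
    have "deg_inner V E y y0 = 0" if "y \<in> T - {y0}" for y
      using that T y0 by (intro orth) auto
    then show ?thesis by (simp add: sum.remove[OF T(1) y0(1)])
  qed
  finally show False using y0 T nonzero by auto
qed

lemma codeg_form_eigenvector_right:
  assumes "codeg_eigenvector V E \<mu> x"
  shows "codeg_form V E y x = \<mu> * deg_inner V E y x"
proof -
  have "codeg_form V E y x = (\<Sum>v\<in>V. y v * (\<Sum>w\<in>V. hcodeg E v w * x w))"
    unfolding codeg_form_def by (simp add: sum_distrib_left mult_ac)
  also have "\<dots> = (\<Sum>v\<in>V. y v * (\<mu> * real (hdeg E v) * x v))"
    using assms by (simp add: codeg_eigenvector_def)
  also have "\<dots> = \<mu> * deg_inner V E y x"
    unfolding deg_inner_def by (simp add: sum_distrib_left mult_ac)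
  finally show ?thesis .
qed

lemma codeg_eigenvectors_deg_orthogonal:
  assumes "finite V" "codeg_eigenvector V E \<mu> x" "codeg_eigenvector V E \<nu> y" "\<mu> \<noteq> \<nu>"
  shows "deg_inner V E x y = 0"
proof -
  have "\<nu> * deg_inner V E x y = codeg_form V E x y"
    by (rule codeg_form_eigenvector_right[OF assms(3), symmetric])
  also have "\<dots> = codeg_form V E y x" by (rule codeg_form_commute[OF assms(1)])
  also have "\<dots> = \<mu> * deg_inner V E x y"
    by (simp add: codeg_form_eigenvector_right[OF assms(2)] deg_inner_commute)
  finally show ?thesis using assms(4) by simp
qed

lemma codeg_eigenvector_restrict:
  "codeg_eigenvector V E \<mu> x \<Longrightarrow> codeg_eigenvector V E \<mu> (\<lambda>v. if v \<in> V then x v else 0)"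
  unfolding codeg_eigenvector_def by (auto cong: sum.cong)

(* Needed because lambda1 is a Min. Eigenvectors of distinct eigenvalues are D-orthogonal, hence
   linearly independent in the span of the point masses on V. *)
lemma finite_lap_eigenvalues:
  assumes fin: "finite V" and deg: "\<And>v. v \<in> V \<Longrightarrow> hdeg E v > 0"
  shows "finite {\<mu>. is_lap_eigenvalue V E \<mu>}"
proof -
  define Eig where "Eig = {\<mu>. is_lap_eigenvalue V E \<mu>}"
  define vec where "vec \<mu> = (\<lambda>v. if v \<in> V then (SOME x. codeg_eigenvector V E \<mu> x) v else 0)" for \<mu>
  have eigvec: "codeg_eigenvector V E \<mu> (vec \<mu>)" if "\<mu> \<in> Eig" for \<mu>
  proof -
    have "\<exists>x. codeg_eigenvector V E \<mu> x"
      using that is_lap_eigenvalue_iff_codeg_eigenvector[OF deg] by (simp add: Eig_def)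
    then have "codeg_eigenvector V E \<mu> (SOME x. codeg_eigenvector V E \<mu> x)" by (rule someI_ex)
    then show ?thesis unfolding vec_def by (rule codeg_eigenvector_restrict)
  qed
  have pos: "deg_inner V E (vec \<mu>) (vec \<mu>) > 0" if "\<mu> \<in> Eig" for \<mu>
    using eigvec[OF that] deg_inner_self_pos[OF fin deg] by (auto simp: codeg_eigenvector_def)
  have orth: "deg_inner V E (vec \<mu>) (vec \<nu>) = 0" if "\<mu> \<in> Eig" "\<nu> \<in> Eig" "\<mu> \<noteq> \<nu>" for \<mu> \<nu>
    using codeg_eigenvectors_deg_orthogonal[OF fin eigvec eigvec] that by blast
  have "inj_on vec Eig"
    by (rule inj_onI) (metis pos orth less_irrefl)
  moreover have "real_fun.independent (vec ` Eig)"
    using pos orth by (intro deg_orthogonal_independent[where V = V and E = E]) force+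
  moreover have "vec ` Eig \<subseteq> real_fun.span ((\<lambda>u v. of_bool (v = u)) ` V)"
    using fin by (auto intro!: real_fun_in_span_deltas simp: vec_def)
  ultimately show ?thesis
    using real_fun.independent_span_bound fin finite_imageD unfolding Eig_def by blast
qed

lemma lambda1_le_lap_eigenvalue:
  assumes "finite V" "\<And>v. v \<in> V \<Longrightarrow> hdeg E v > 0" "is_lap_eigenvalue V E \<mu>"
  shows "lambda1 V E \<le> \<mu>"
  unfolding lambda1_def using finite_lap_eigenvalues[OF assms(1,2)] assms(3) by (intro Min_le) auto

lemma is_lap_eigenvalue_edge_size:
  assumes "uniform_hypergraph V E c" "V \<noteq> {}"
  shows "is_lap_eigenvalue V E (real c)"
proof -
  have "codeg_eigenvector V E (real c) (\<lambda>_. 1)"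
    using assms by (auto simp: codeg_eigenvector_def sum_hcodeg_row)
  then show ?thesis
    using is_lap_eigenvalue_iff_codeg_eigenvector uniform_hypergraphD(5)[OF assms(1)] by blast
qed

lemma codeg_form_eq_sum_edge_squares:
  assumes "finite V" "finite E" "\<And>e. e \<in> E \<Longrightarrow> e \<subseteq> V"
  shows "codeg_form V E x x = (\<Sum>e\<in>E. (\<Sum>v\<in>e. x v)\<^sup>2)"
proof -
  let ?a = "\<lambda>e v. of_bool (v \<in> e) * x v"
  have "codeg_form V E x x = (\<Sum>v\<in>V. \<Sum>w\<in>V. \<Sum>e\<in>E. ?a e v * ?a e w)"
    unfolding codeg_form_def hcodeg_eq_sum_edges[OF assms(2)] sum_distrib_right
    by (intro sum.cong refl) (simp only: mult_ac)
  also have "\<dots> = (\<Sum>v\<in>V. \<Sum>e\<in>E. \<Sum>w\<in>V. ?a e v * ?a e w)"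
    by (intro sum.cong refl) (rule sum.swap)
  also have "\<dots> = (\<Sum>e\<in>E. (\<Sum>v\<in>V. ?a e v) * (\<Sum>w\<in>V. ?a e w))"
    unfolding sum_product by (rule sum.swap)
  also have "\<dots> = (\<Sum>e\<in>E. (\<Sum>v\<in>e. x v)\<^sup>2)"
    using assms by (intro sum.cong refl) (simp add: power2_eq_square Int_absorb1)
  finally show ?thesis .
qed

lemma lap_eigenvalue_nonneg:
  assumes "uniform_hypergraph V E c" "is_lap_eigenvalue V E \<mu>"
  shows "0 \<le> \<mu>"
proof -
  note uh = uniform_hypergraphD[OF assms(1)]
  obtain x where x: "codeg_eigenvector V E \<mu> x"
    using assms(2) is_lap_eigenvalue_iff_codeg_eigenvector[OF uh(5)] by blast
  then obtain v where "v \<in> V" "x v \<noteq> 0" by (auto simp: codeg_eigenvector_def)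
  then have "deg_inner V E x x > 0" using deg_inner_self_pos[OF uh(1,5)] by blast
  moreover have "\<mu> * deg_inner V E x x = (\<Sum>e\<in>E. (\<Sum>v\<in>e. x v)\<^sup>2)"
    using codeg_form_eigenvector_right[OF x, of x] codeg_form_eq_sum_edge_squares[OF uh(1-3)] by simp
  moreover have "(\<Sum>e\<in>E. (\<Sum>v\<in>e. x v)\<^sup>2) \<ge> 0" by (rule sum_nonneg) simp
  ultimately show ?thesis by (metis zero_le_mult_iff not_less)
qed

lemma lambda1_eq_0_if_lap_eigenvalue_0:
  assumes "uniform_hypergraph V E c" "is_lap_eigenvalue V E 0"
  shows "lambda1 V E = 0"
  unfolding lambda1_def
  using assms lap_eigenvalue_nonneg[OF assms(1)]
    finite_lap_eigenvalues[OF uniform_hypergraphD(1,5)[OF assms(1)]]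
  by (intro Min_eqI) auto

section \<open>Tailored colourings\<close>

definition centered_indicator :: "nat \<Rightarrow> ('a \<Rightarrow> nat) \<Rightarrow> nat \<Rightarrow> 'a \<Rightarrow> real" where
  "centered_indicator k f j v = of_bool (f v = j) - 1 / real k"

lemma sum_centered_indicator_products:
  assumes "f v \<in> {1..k}" "f w \<in> {1..k}"
  shows "(\<Sum>j\<in>{1..k}. centered_indicator k f j v * centered_indicator k f j w) =
           of_bool (f v = f w) - 1 / real k"
proof -
  have k: "real k > 0" using assms(1) by auto
  have "(\<Sum>j\<in>{1..k}. of_bool (f v = j) * of_bool (f w = j) :: real) = of_bool (f v = f w)"
  proof -
    have "{1..k} \<inter> {j. f w = j} = {f w}" using assms(2) by auto
    then show ?thesis by simp
  qed
  moreover have "(\<Sum>j\<in>{1..k}. of_bool (f u = j) :: real) = 1" if "f u \<in> {1..k}" for u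
    using that by (simp add: of_bool_def sum.delta)
  ultimately show ?thesis
    using assms k unfolding centered_indicator_def
    by (simp add: algebra_simps sum.distrib sum_subtractf sum_divide_distrib[symmetric] power2_eq_square)
qed

lemma sum_codeg_form_centered_indicators:
  assumes "\<And>v. v \<in> V \<Longrightarrow> f v \<in> {1..k}"
  shows "(\<Sum>j\<in>{1..k}. codeg_form V E (centered_indicator k f j) (centered_indicator k f j)) =
           (\<Sum>v\<in>V. \<Sum>w\<in>V. hcodeg E v w * (of_bool (f v = f w) - 1 / real k))"
proof -
  let ?x = "centered_indicator k f"
  note products = sum_centered_indicator_products[where f = f and k = k, OF assms assms]
  have "(\<Sum>j\<in>{1..k}. codeg_form V E (?x j) (?x j)) =
          (\<Sum>v\<in>V. \<Sum>j\<in>{1..k}. \<Sum>w\<in>V. hcodeg E v w * ?x j v * ?x j w)"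
    unfolding codeg_form_def by (rule sum.swap)
  also have "\<dots> = (\<Sum>v\<in>V. \<Sum>w\<in>V. hcodeg E v w * (\<Sum>j\<in>{1..k}. ?x j v * ?x j w))"
    by (subst sum.swap) (simp add: sum_distrib_left mult.assoc)
  also have "\<dots> = (\<Sum>v\<in>V. \<Sum>w\<in>V. hcodeg E v w * (of_bool (f v = f w) - 1 / real k))"
    by (intro sum.cong refl) (simp only: products)
  finally show ?thesis .
qed

lemma sum_deg_inner_centered_indicators:
  assumes "\<And>v. v \<in> V \<Longrightarrow> f v \<in> {1..k}"
  shows "(\<Sum>j\<in>{1..k}. deg_inner V E (centered_indicator k f j) (centered_indicator k f j)) =
           (1 - 1 / real k) * (\<Sum>v\<in>V. real (hdeg E v))"
proof -
  let ?x = "centered_indicator k f"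
  note products = sum_centered_indicator_products[where f = f and k = k, OF assms assms]
  have "(\<Sum>j\<in>{1..k}. deg_inner V E (?x j) (?x j)) =
          (\<Sum>v\<in>V. real (hdeg E v) * (\<Sum>j\<in>{1..k}. ?x j v * ?x j v))"
    unfolding deg_inner_def by (subst sum.swap) (simp add: sum_distrib_left mult.assoc)
  also have "\<dots> = (\<Sum>v\<in>V. real (hdeg E v) * (1 - 1 / real k))"
    by (intro sum.cong refl) (simp only: products of_bool_eq(2) refl)
  also have "\<dots> = (1 - 1 / real k) * (\<Sum>v\<in>V. real (hdeg E v))"
    by (simp add: sum_distrib_left mult.commute)
  finally show ?thesis .
qed

lemma tailored_row_bound:
  assumes "uniform_hypergraph V E c" "q_tailored V E q k f" "v \<in> V"
  shows "(\<Sum>w\<in>V. hcodeg E v w * (of_bool (f v = f w) - 1 / real k))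
           \<le> (q + 1 - real c / real k) * real (hdeg E v)"
proof -
  note uh = uniform_hypergraphD[OF assms(1)]
  let ?class = "{w\<in>V. f w = f v}"
  have "(\<Sum>w\<in>V. hcodeg E v w * of_bool (f v = f w)) = (\<Sum>w\<in>?class. hcodeg E v w)"
    using uh(1) by (simp add: Int_def eq_commute conj_commute)
  also have "\<dots> = (\<Sum>w\<in>?class. \<bar>hadj E v w\<bar>) + real (hdeg E v)"
  proof -
    have "?class \<inter> {w. w = v} = {v}" using assms(3) by auto
    then show ?thesis using uh(1) by (simp add: hcodeg_eq_abs_hadj sum.distrib)
  qed
  also have "\<dots> \<le> (q + 1) * real (hdeg E v)"
    using assms(2,3) by (simp add: q_tailored_def algebra_simps)
  finally have "(\<Sum>w\<in>V. hcodeg E v w * of_bool (f v = f w)) \<le> (q + 1) * real (hdeg E v)" .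
  then show ?thesis
    using sum_hcodeg_row[OF assms(1,3)]
    by (simp add: right_diff_distrib sum_subtractf sum_divide_distrib[symmetric] algebra_simps)
qed

lemma tailored_coloring_eigenvalue_bound:
  assumes uh: "uniform_hypergraph V E c" and ne: "V \<noteq> {}" and tailored: "q_tailored V E q k f"
    and rayleigh: "\<And>z. \<mu> * deg_inner V E z z \<le> codeg_form V E z z"
  shows "\<mu> * (real k - 1) \<le> real k * (q + 1) - real c"
proof -
  let ?x = "centered_indicator k f"
  have colors: "\<And>v. v \<in> V \<Longrightarrow> f v \<in> {1..k}" using tailored by (simp add: q_tailored_def)
  then have k: "real k > 0" using ne by fastforce
  define vol where "vol = (\<Sum>v\<in>V. real (hdeg E v))"
  have "vol > 0"
    unfolding vol_def using uniform_hypergraphD(1,5)[OF uh] ne by (intro sum_pos) auto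
  have "\<mu> * ((1 - 1 / real k) * vol) = \<mu> * (\<Sum>j\<in>{1..k}. deg_inner V E (?x j) (?x j))"
    by (simp only: vol_def sum_deg_inner_centered_indicators[OF colors])
  also have "\<dots> = (\<Sum>j\<in>{1..k}. \<mu> * deg_inner V E (?x j) (?x j))"
    by (rule sum_distrib_left)
  also have "\<dots> \<le> (\<Sum>j\<in>{1..k}. codeg_form V E (?x j) (?x j))"
    by (intro sum_mono rayleigh)
  also have "\<dots> = (\<Sum>v\<in>V. \<Sum>w\<in>V. hcodeg E v w * (of_bool (f v = f w) - 1 / real k))"
    by (rule sum_codeg_form_centered_indicators[OF colors])
  also have "\<dots> \<le> (\<Sum>v\<in>V. (q + 1 - real c / real k) * real (hdeg E v))"
    by (intro sum_mono tailored_row_bound[OF uh tailored])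
  also have "\<dots> = (q + 1 - real c / real k) * vol"
    by (simp add: vol_def sum_distrib_left)
  finally have "\<mu> * (1 - 1 / real k) \<le> q + 1 - real c / real k"
    using \<open>vol > 0\<close> by (simp add: mult.assoc[symmetric])
  then have "real k * (\<mu> * (1 - 1 / real k)) \<le> real k * (q + 1 - real c / real k)"
    using k by (intro mult_left_mono) auto
  then show ?thesis using k by (simp add: algebra_simps)
qed

lemma ratio_le_of_eigenvalue_bound:
  fixes l c q k :: real
  assumes "l * (k - 1) \<le> k * (q + 1) - c" "l \<le> c" "1 \<le> k"
  shows "(c - l) / (q + 1 - l) \<le> k"
proof (cases "q + 1 - l > 0")
  case True
  then show ?thesis using assms(1) by (simp add: divide_le_eq algebra_simps)
next
  case False
  then have "(c - l) / (q + 1 - l) \<le> 0" using assms(2) by (simp add: divide_nonneg_nonpos)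
  then show ?thesis using assms(3) by simp
qed

lemma chi_qt_attained:
  assumes "finite V" "0 \<le> q"
  obtains f where "q_tailored V E q (chi_qt V E q) f"
proof -
  obtain h where h: "bij_betw h V {0..<card V}" using ex_bij_betw_finite_nat[OF assms(1)] by blast
  have "q_tailored V E q (card V) (\<lambda>v. h v + 1)"
    unfolding q_tailored_def
  proof (intro conjI ballI)
    fix v assume v: "v \<in> V"
    show "h v + 1 \<in> {1..card V}" using bij_betwE[OF h] v by fastforce
    have "{w \<in> V. h w + 1 = h v + 1} = {v}" using h v by (auto simp: bij_betw_def inj_on_def)
    then show "(\<Sum>w\<in>{w \<in> V. h w + 1 = h v + 1}. \<bar>hadj E v w\<bar>) \<le> q * real (hdeg E v)"
      using assms(2) by (simp add: hadj_def)
  qed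
  then have "\<exists>f. q_tailored V E q (chi_qt V E q) f"
    unfolding chi_qt_def using LeastI_ex[of "\<lambda>k. \<exists>f. q_tailored V E q k f"] by blast
  then show thesis using that by blast
qed

theorem chi_qt_lower_bound:
  assumes uh: "uniform_hypergraph V E c" and "c > 0" "0 \<le> q"
  shows "(real c - lambda1 V E) / (q + 1 - lambda1 V E) \<le> real (chi_qt V E q)"
proof -
  note fin = uniform_hypergraphD(1)[OF uh] and deg = uniform_hypergraphD(5)[OF uh]
  have ne: "V \<noteq> {}" using uniform_hypergraph_vertices_nonempty[OF uh \<open>c > 0\<close>] .
  obtain \<mu> where \<mu>: "is_lap_eigenvalue V E \<mu>"
    and rayleigh: "\<And>z. \<mu> * deg_inner V E z z \<le> codeg_form V E z z"
    using exists_lap_eigenvalue_below_rayleigh[OF fin ne deg] by blast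
  obtain f where f: "q_tailored V E q (chi_qt V E q) f" using chi_qt_attained[OF fin \<open>0 \<le> q\<close>] .
  have k1: "1 \<le> real (chi_qt V E q)" using f ne by (fastforce simp: q_tailored_def)
  have "lambda1 V E * (real (chi_qt V E q) - 1) \<le> \<mu> * (real (chi_qt V E q) - 1)"
    using lambda1_le_lap_eigenvalue[OF fin deg \<mu>] k1 by (intro mult_right_mono) auto
  also have "\<dots> \<le> real (chi_qt V E q) * (q + 1) - real c"
    by (rule tailored_coloring_eigenvalue_bound[OF uh ne f rayleigh])
  finally show ?thesis
    using lambda1_le_lap_eigenvalue[OF fin deg is_lap_eigenvalue_edge_size[OF uh ne]] k1
    by (rule ratio_le_of_eigenvalue_bound)
qed

section \<open>A single edge\<close>

lemma hdeg_single_edge: "v \<in> V \<Longrightarrow> hdeg {V} v = 1"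
  using hcodeg_diag[of "{V}" v] hcodeg_eq_sum_edges[of "{V}" v v] by simp

lemma hcodeg_single_edge: "v \<in> V \<Longrightarrow> w \<in> V \<Longrightarrow> hcodeg {V} v w = 1"
  by (simp add: hcodeg_eq_sum_edges)

lemma abs_hadj_single_edge: "v \<in> V \<Longrightarrow> w \<in> V \<Longrightarrow> \<bar>hadj {V} v w\<bar> = of_bool (v \<noteq> w)"
  using hcodeg_eq_abs_hadj[of "{V}" v w] by (auto simp: hcodeg_single_edge hdeg_single_edge)

lemma uniform_hypergraph_single_edge: "finite V \<Longrightarrow> uniform_hypergraph V {V} (card V)"
  by (simp add: uniform_hypergraph_def hdeg_single_edge)

lemma lambda1_single_edge:
  assumes "finite V" "2 \<le> card V"
  shows "lambda1 V {V} = 0"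
proof (rule lambda1_eq_0_if_lap_eigenvalue_0[OF uniform_hypergraph_single_edge[OF assms(1)]])
  have "\<not> card V \<le> Suc 0" using assms(2) by simp
  then obtain a b where ab: "a \<in> V" "b \<in> V" "a \<noteq> b"
    using card_le_Suc0_iff_eq[OF assms(1)] by blast
  define x :: "'a \<Rightarrow> real" where "x v = of_bool (v = a) - of_bool (v = b)" for v
  have "V \<inter> {v. v = a} = {a}" "V \<inter> {v. v = b} = {b}" using ab by auto
  then have "(\<Sum>w\<in>V. x w) = 0"
    using assms(1) by (simp add: x_def sum_subtractf)
  then have "codeg_eigenvector V {V} 0 x"
    using ab by (auto simp: codeg_eigenvector_def hcodeg_single_edge x_def cong: sum.cong)
  then show "is_lap_eigenvalue V {V} 0"
    using is_lap_eigenvalue_iff_codeg_eigenvector[of V "{V}"] hdeg_single_edge by fastforce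
qed

lemma q_tailored_single_edge_iff:
  assumes "finite V"
  shows "q_tailored V {V} q k f \<longleftrightarrow> (\<forall>v\<in>V. f v \<in> {1..k} \<and> real (card {w\<in>V. f w = f v}) \<le> q + 1)"
proof -
  have "(\<Sum>w\<in>{w\<in>V. f w = f v}. \<bar>hadj {V} v w\<bar>) = real (card {w\<in>V. f w = f v}) - 1"
    if v: "v \<in> V" for v
  proof -
    let ?C = "{w\<in>V. f w = f v}"
    have C: "finite ?C" "v \<in> ?C" using assms v by auto
    have "(\<Sum>w\<in>?C. \<bar>hadj {V} v w\<bar>) = (\<Sum>w\<in>?C. of_bool (w \<noteq> v))"
      using v by (intro sum.cong) (auto simp: abs_hadj_single_edge)
    also have "\<dots> = real (card (?C - {v}))"
      using C(1) by (simp add: Diff_eq Int_def)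
    also have "\<dots> = real (card ?C) - 1"
    proof -
      have "0 < card ?C" using C by (auto simp: card_gt_0_iff)
      then show ?thesis using C by (simp add: card_Diff_singleton of_nat_diff)
    qed
    finally show ?thesis .
  qed
  then show ?thesis unfolding q_tailored_def by (auto simp: hdeg_single_edge)
qed

lemma card_le_if_q_tailored_single_edge:
  assumes "finite V" "q_tailored V {V} (real q) k f"
  shows "card V \<le> k * (q + 1)"
proof -
  have "V = (\<Union>j\<in>{1..k}. {w\<in>V. f w = j})"
    using assms(2) by (auto simp: q_tailored_def)
  then have "card V \<le> (\<Sum>j\<in>{1..k}. card {w\<in>V. f w = j})"
    by (metis card_UN_le finite_atLeastAtMost)
  also have "\<dots> \<le> (\<Sum>j\<in>{1..k}. q + 1)"
  proof (rule sum_mono)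
    fix j
    show "card {w\<in>V. f w = j} \<le> q + 1"
    proof (cases "\<exists>v\<in>V. f v = j")
      case True
      then show ?thesis
        using assms unfolding q_tailored_single_edge_iff[OF assms(1)] by fastforce
    next
      case False
      then have "{w\<in>V. f w = j} = {}" by auto
      then show ?thesis by (metis card.empty le0)
    qed
  qed
  finally show ?thesis by simp
qed

lemma chi_qt_single_edge:
  assumes "(q + 1) dvd c"
  shows "chi_qt {0..<c} {{0..<c}} (real q) = c div (q + 1)"
proof -
  obtain k0 where c: "c = (q + 1) * k0" using assms by (elim dvdE)
  let ?f = "\<lambda>v. v div (q + 1) + 1"
  have tailored: "q_tailored {0..<c} {{0..<c}} (real q) k0 ?f"
    unfolding q_tailored_single_edge_iff[OF finite_atLeastLessThan]
  proof (intro ballI conjI)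
    fix v assume "v \<in> {0..<c}"
    then show "?f v \<in> {1..k0}"
      using c less_mult_imp_div_less[of v k0 "q + 1"] by (simp add: mult.commute)
    define a where "a = v div (q + 1)"
    have "{w\<in>{0..<c}. ?f w = ?f v} \<subseteq> {a * (q + 1)..<a * (q + 1) + (q + 1)}"
    proof
      fix w assume "w \<in> {w\<in>{0..<c}. ?f w = ?f v}"
      then have "a = w div (q + 1)" by (simp add: a_def)
      then have "a * (q + 1) + w mod (q + 1) = w" by (simp only: div_mult_mod_eq)
      moreover have "w mod (q + 1) < q + 1" by (rule mod_less_divisor) simp
      ultimately show "w \<in> {a * (q + 1)..<a * (q + 1) + (q + 1)}"
        unfolding atLeastLessThan_iff by linarith
    qed
    then have "card {w\<in>{0..<c}. ?f w = ?f v} \<le> card {a * (q + 1)..<a * (q + 1) + (q + 1)}"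
      by (rule card_mono[OF finite_atLeastLessThan])
    then show "real (card {w\<in>{0..<c}. ?f w = ?f v}) \<le> real q + 1" by simp
  qed
  have minimal: "k0 \<le> k" if "q_tailored {0..<c} {{0..<c}} (real q) k f" for k f
  proof -
    have "(q + 1) * k0 \<le> (q + 1) * k"
      using card_le_if_q_tailored_single_edge[OF finite_atLeastLessThan that] c
      by (simp only: card_atLeastLessThan diff_zero mult.commute)
    then show ?thesis using mult_le_cancel1[of "q + 1" k0 k] by linarith
  qed
  have "chi_qt {0..<c} {{0..<c}} (real q) = k0"
    unfolding chi_qt_def by (rule Least_equality) (use tailored minimal in blast)+
  then show ?thesis using c nonzero_mult_div_cancel_left[of "q + 1" k0] by simp
qed

theorem mainTheorem11:
  shows "(\<forall>(V :: 'a set) (E :: 'a set set) (c :: nat) (q :: real).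
            uniform_hypergraph V E c \<and> c \<ge> 2 \<and> 0 \<le> q \<and> q \<le> real c - 1 \<longrightarrow>
            real (chi_qt V E q) \<ge> (real c - lambda1 V E) / (q + 1 - lambda1 V E))
       \<and> (\<forall>(c :: nat) (q :: nat). c \<ge> 2 \<and> (q + 1) dvd c \<longrightarrow>
            (\<exists>(V :: nat set) (E :: nat set set). uniform_hypergraph V E c \<and>
               real (chi_qt V E (real q)) = (real c - lambda1 V E) / (real q + 1 - lambda1 V E)))"
proof (intro conjI allI impI)
  fix V :: "'a set" and E c and q :: real
  assume "uniform_hypergraph V E c \<and> c \<ge> 2 \<and> 0 \<le> q \<and> q \<le> real c - 1"
  then show "real (chi_qt V E q) \<ge> (real c - lambda1 V E) / (q + 1 - lambda1 V E)"
    by (intro chi_qt_lower_bound) auto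
next
  fix c q :: nat
  assume "c \<ge> 2 \<and> (q + 1) dvd c"
  then have "uniform_hypergraph {0..<c} {{0..<c}} c" "lambda1 {0..<c} {{0..<c}} = 0"
    "real (chi_qt {0..<c} {{0..<c}} (real q)) = real c / (real q + 1)"
    using uniform_hypergraph_single_edge[of "{0..<c}"] lambda1_single_edge[of "{0..<c}"]
      chi_qt_single_edge[of q c] real_of_nat_div[of "q + 1" c] by auto
  then show "\<exists>(V :: nat set) (E :: nat set set). uniform_hypergraph V E c \<and>
               real (chi_qt V E (real q)) = (real c - lambda1 V E) / (real q + 1 - lambda1 V E)"
    by (intro exI[of _ "{0..<c}"] exI[of _ "{{0..<c}}"]) simp
qed

end
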